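(* Let $\mathfrak{R}$ be an alternative ring with a nontrivial idempotent $e_1$ and Peirce decomposition $\mathfrak{R}=\mathfrak{R}_{11}\oplus\mathfrak{R}_{12}\oplus\mathfrak{R}_{21}\oplus\mathfrak{R}_{22}$, satisfying: (i) if $a_{11}\in\mathfrak{R}_{11}$, $a_{22}\in\mathfrak{R}_{22}$ and $[a_{11}+a_{22},\mathfrak{R}_{12}]=0$, then $a_{11}+a_{22}\in\mathcal{Z}(\mathfrak{R})$; (ii) if $a_{11}\in\mathfrak{R}_{11}$, $a_{22}\in\mathfrak{R}_{22}$ and $[a_{11}+a_{22},\mathfrak{R}_{21}]=0$, then $a_{11}+a_{22}\in\mathcal{Z}(\mathfrak{R})$. Let $\mathcal{D}$ be a multiplicative Lie-type derivation of $\mathfrak{R}$. Then for any $a_{11}\in\mathfrak{R}_{11}$ and $b_{ij}\in\mathfrak{R}_{ij}$ with $i\neq j$ there exists $z_{a_{11},b_{ij}}\in\mathcal{Z}(\mathfrak{R})$ such that $\mathcal{D}(a_{11}+b_{ij})=\mathcal{D}(a_{11})+\mathcal{D}(b_{ij})+z_{a_{11},b_{ij}}$.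
   Context: Rings are not assumed associative or unital. The associator is $(x,y,z)=(xy)z-x(yz)$; $\mathfrak{R}$ is alternative if $(x,x,y)=0=(y,x,x)$ for all $x,y$. $[x,y]=xy-yx$ and $\mathcal{Z}(\mathfrak{R})=\{r: [r,x]=0\ \forall x\in\mathfrak{R}\}$. Define $p_1(x)=x$, $p_n(x_1,\dots,x_n)=[p_{n-1}(x_1,\dots,x_{n-1}),x_n]$. For $n\ge2$, a (not necessarily additive) map $\mathcal{D}\colon\mathfrak{R}\to\mathfrak{R}$ is a multiplicative Lie $n$-derivation if $\mathcal{D}(p_n(x_1,\dots,x_n))=\sum_{i=1}^n p_n(x_1,\dots,\mathcal{D}(x_i),\dots,x_n)$ for all $x_i\in\mathfrak{R}$; a multiplicative Lie-type derivation is a multiplicative Lie $n$-derivation for some $n\ge2$. A nontrivial idempotent is $e_1\ne0$ with $e_1^2=e_1$ which is not a multiplicative identity. With $e_2a:=a-e_1a$, $ae_2:=a-ae_1$, set $\mathfrak{R}_{ij}=e_i\mathfrak{R}e_j$ ($i,j=1,2$), so $\mathfrak{R}=\bigoplus_{i,j}\mathfrak{R}_{ij}$. *)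

theory Defs
  imports Main
begin

class nonassoc_ring = ab_group_add + times +
  assumes na_distrib_right: "(a + b) * c = a * c + b * c"
  and na_distrib_left: "a * (b + c) = a * b + a * c"

class alternative_ring = nonassoc_ring +
  assumes left_alternative: "(x * x) * y = x * (x * y)"
  and right_alternative: "(y * x) * x = y * (x * x)"

definition associator :: "'a::{times,minus} \<Rightarrow> 'a \<Rightarrow> 'a \<Rightarrow> 'a" where
  "associator x y z = (x * y) * z - x * (y * z)"

definition commutator :: "'a::{times,minus} \<Rightarrow> 'a \<Rightarrow> 'a" where
  "commutator x y = x * y - y * x"

definition center :: "'a::{times,minus,zero} set" where
  "center = {r. \<forall>x. commutator r x = 0}"

text \<open>Lie polynomials, 0-indexed: lie_poly k x = p_{k+1}(x 0, ..., x k).\<close>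
fun lie_poly :: "nat \<Rightarrow> (nat \<Rightarrow> 'a::{times,minus}) \<Rightarrow> 'a" where
  "lie_poly 0 x = x 0"
| "lie_poly (Suc k) x = commutator (lie_poly k x) (x (Suc k))"

text \<open>Multiplicative Lie n-derivation (not assumed additive); the arguments
x_1..x_n are x 0, ..., x (n-1).\<close>
definition mult_lie_n_derivation :: "nat \<Rightarrow> ('a::nonassoc_ring \<Rightarrow> 'a) \<Rightarrow> bool" where
  "mult_lie_n_derivation n D \<longleftrightarrow>
     (\<forall>x. D (lie_poly (n - 1) x) = (\<Sum>i<n. lie_poly (n - 1) (x(i := D (x i)))))"

definition mult_lie_type_derivation :: "('a::nonassoc_ring \<Rightarrow> 'a) \<Rightarrow> bool" where
  "mult_lie_type_derivation D \<longleftrightarrow> (\<exists>n\<ge>2. mult_lie_n_derivation n D)"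

definition nontrivial_idempotent :: "'a::nonassoc_ring \<Rightarrow> bool" where
  "nontrivial_idempotent e \<longleftrightarrow> e \<noteq> 0 \<and> e * e = e \<and> \<not> (\<forall>x. e * x = x \<and> x * e = x)"

text \<open>e_i a and a e_j for i,j in {1,2}, with e_2 a = a - e_1 a, a e_2 = a - a e_1.\<close>
definition lmul_e :: "'a::nonassoc_ring \<Rightarrow> nat \<Rightarrow> 'a \<Rightarrow> 'a" where
  "lmul_e e i a = (if i = 1 then e * a else a - e * a)"

definition rmul_e :: "'a::nonassoc_ring \<Rightarrow> nat \<Rightarrow> 'a \<Rightarrow> 'a" where
  "rmul_e e j a = (if j = 1 then a * e else a - a * e)"

definition peirce :: "'a::nonassoc_ring \<Rightarrow> nat \<Rightarrow> nat \<Rightarrow> 'a set" where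
  "peirce e i j = {rmul_e e j (lmul_e e i a) | a. True}"

end

theory Submission
  imports Defs
begin

text \<open>
  Put \<open>T = D (a11 + b) - D a11 - D b\<close>. If a Lie polynomial \<open>p\<^sub>n(x, y\<^sub>2, ..., y\<^sub>n)\<close> vanishes at
  \<open>x = a11\<close>, then applying \<open>D\<close> to \<open>p\<^sub>n(a11 + b, y) = p\<^sub>n(b, y)\<close> and using that \<open>p\<^sub>n\<close> is additive in
  \<open>x\<close> gives \<open>p\<^sub>n(T, y) = 0\<close>; the same holds with the roles of \<open>a11\<close> and \<open>b\<close> exchanged.
  Since \<open>x \<mapsto> [x, e]\<close> acts as 0 on \<open>R\<^sub>1\<^sub>1 + R\<^sub>2\<^sub>2\<close>, as \<open>-1\<close> on \<open>R\<^sub>1\<^sub>2\<close> and as 1 on \<open>R\<^sub>2\<^sub>1\<close>, the choice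
  \<open>y = (e, ..., e)\<close> shows that \<open>T \<in> R\<^sub>1\<^sub>1 + R\<^sub>2\<^sub>2\<close>. For \<open>c \<in> R\<^sub>j\<^sub>i\<close> one has \<open>[[b, c], e] = 0\<close>, hence
  \<open>p\<^sub>n(T, c, e, ..., e) = 0\<close>; as \<open>[T, c] \<in> R\<^sub>j\<^sub>i\<close>, this forces \<open>[T, c] = 0\<close>, and hypothesis (i)
  or (ii) puts \<open>T\<close> in the centre. The Peirce multiplication rules behind this, notably
  \<open>R\<^sub>i\<^sub>i R\<^sub>j\<^sub>i = R\<^sub>i\<^sub>j R\<^sub>i\<^sub>i = 0\<close>, come from the Moufang identities.
\<close>

section \<open>Alternative rings\<close>

lemma na_mult_zero_left [simp]: "0 * (a::'a::nonassoc_ring) = 0"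
  using na_distrib_right[of 0 0 a] by simp

lemma na_mult_zero_right [simp]: "(a::'a::nonassoc_ring) * 0 = 0"
  using na_distrib_left[of a 0 0] by simp

lemma na_minus_mult_left: "(- a) * b = - ((a::'a::nonassoc_ring) * b)"
  using na_distrib_right[of "- a" a b] by (simp add: eq_neg_iff_add_eq_0)

lemma na_minus_mult_right: "(a::'a::nonassoc_ring) * (- b) = - (a * b)"
  using na_distrib_left[of a "- b" b] by (simp add: eq_neg_iff_add_eq_0)

lemma na_left_diff_distrib: "(a - b) * c = a * c - (b::'a::nonassoc_ring) * c"
  by (simp only: diff_conv_add_uminus na_distrib_right na_minus_mult_left)

lemma na_right_diff_distrib: "(a::'a::nonassoc_ring) * (b - c) = a * b - a * c"
  by (simp only: diff_conv_add_uminus na_distrib_left na_minus_mult_right)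

lemmas na_distribs = na_distrib_left na_distrib_right na_left_diff_distrib
  na_right_diff_distrib na_minus_mult_left na_minus_mult_right

lemma commutator_add_left: "commutator (a + b) c = commutator a c + commutator (b::'a::nonassoc_ring) c"
  by (simp add: commutator_def na_distribs)

lemma commutator_diff_left: "commutator (a - b) c = commutator a c - commutator (b::'a::nonassoc_ring) c"
  by (simp add: commutator_def na_distribs)

lemma commutator_zero_left [simp]: "commutator 0 (a::'a::nonassoc_ring) = 0"
  by (simp add: commutator_def)

lemma commutator_zero_right [simp]: "commutator (a::'a::nonassoc_ring) 0 = 0"
  by (simp add: commutator_def)

lemma associator_teichmuller:
  "associator (w * x) y z - associator w (x * y) z + associator w x (y * z)
     = w * associator x y z + associator w x y * (z::'a::nonassoc_ring)"
  by (simp add: associator_def na_distribs)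

lemma associator_left_alternative [simp]: "associator x x (y::'a::alternative_ring) = 0"
  by (simp add: associator_def left_alternative)

lemma associator_right_alternative [simp]: "associator y x (x::'a::alternative_ring) = 0"
  by (simp add: associator_def right_alternative)

lemma associator_swap12: "associator y x z = - associator x y (z::'a::alternative_ring)"
  using left_alternative[of "x + y" z]
  by (simp add: associator_def na_distribs left_alternative algebra_simps)

lemma associator_swap23: "associator x z y = - associator x y (z::'a::alternative_ring)"
  using right_alternative[of x "y + z"]
  by (simp add: associator_def na_distribs right_alternative algebra_simps)

lemma associator_flexible [simp]: "associator x y (x::'a::alternative_ring) = 0"
  by (simp add: associator_swap23[of x y x])

lemma flexible: "(x * y) * x = x * (y * (x::'a::alternative_ring))"
  using associator_flexible[of x y] unfolding associator_def by simp

lemma moufang_left: "((x * y) * x) * z = x * (y * (x * (z::'a::alternative_ring)))"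
proof -
  have teich_y: "associator (x * x) y z - associator x (x * y) z = x * associator x y z"
    and teich_z: "associator (x * x) z y - associator x (x * z) y = x * associator x z y"
    using associator_teichmuller[of x x y z] associator_teichmuller[of x x z y] by simp_all
  have "((x * y) * x) * z - x * (y * (x * z)) = associator (x * y) x z + associator x y (x * z)"
    by (simp add: associator_def)
  also have "\<dots> = - associator x (x * y) z - associator x (x * z) y"
    by (simp add: associator_swap12[of x "x * y"] associator_swap23[of x "x * z"])
  also have "\<dots> = x * (associator x y z + associator x z y)
      - (associator (x * x) y z + associator (x * x) z y)"
    using teich_y teich_z by (simp add: na_distrib_left algebra_simps)
  also have "\<dots> = 0"
    by (simp add: associator_swap23[of x z y] associator_swap23[of "x * x" z y])
  finally show ?thesis by simp
qed

lemma moufang_right: "z * ((x * y) * x) = ((z * x) * y) * (x::'a::alternative_ring)"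
proof -
  have teich_z: "associator z y (x * x) - associator z (y * x) x = associator z y x * x"
    and teich_y: "associator y z (x * x) - associator y (z * x) x = associator y z x * x"
    using associator_teichmuller[of z y x x] associator_teichmuller[of y z x x] by simp_all
  have "((z * x) * y) * x - z * (x * (y * x)) = associator (z * x) y x + associator z x (y * x)"
    by (simp add: associator_def)
  also have "\<dots> = - associator y (z * x) x - associator z (y * x) x"
    by (simp add: associator_swap12[of y "z * x"] associator_swap23[of z "y * x"])
  also have "\<dots> = (associator z y x + associator y z x) * x
      - (associator z y (x * x) + associator y z (x * x))"
    using teich_y teich_z by (simp add: na_distrib_right algebra_simps)
  also have "\<dots> = 0"
    by (simp add: associator_swap12[of y z x] associator_swap12[of y z "x * x"])
  finally show ?thesis by (simp add: flexible)
qed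

section \<open>Peirce decomposition\<close>

lemma lmul_e_idem:
  "e * e = e \<Longrightarrow> lmul_e e i (lmul_e e i a) = lmul_e e i (a::'a::alternative_ring)"
  by (simp add: lmul_e_def na_distribs left_alternative[of e, symmetric])

lemma rmul_e_idem:
  "e * e = e \<Longrightarrow> rmul_e e j (rmul_e e j a) = rmul_e e j (a::'a::alternative_ring)"
  by (simp add: rmul_e_def na_distribs right_alternative)

lemma lmul_rmul_e_commute:
  "lmul_e e i (rmul_e e j a) = rmul_e e j (lmul_e e i (a::'a::alternative_ring))"
  by (simp add: lmul_e_def rmul_e_def na_distribs flexible)

text \<open>In \<^const>\<open>lmul_e\<close> and \<^const>\<open>rmul_e\<close> every index other than 1 plays the role of 2, so
  lemmas whose proofs do not distinguish the two cases need no range hypothesis on the indices.\<close>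

lemma mem_peirce_iff:
  assumes "e * e = (e::'a::alternative_ring)"
  shows "x \<in> peirce e i j \<longleftrightarrow> lmul_e e i x = x \<and> rmul_e e j x = x"
proof
  assume "x \<in> peirce e i j"
  then obtain a where "x = rmul_e e j (lmul_e e i a)"
    by (auto simp: peirce_def)
  then show "lmul_e e i x = x \<and> rmul_e e j x = x"
    using assms by (simp add: lmul_rmul_e_commute lmul_e_idem rmul_e_idem)
next
  assume "lmul_e e i x = x \<and> rmul_e e j x = x"
  then show "x \<in> peirce e i j"
    unfolding peirce_def by (metis (mono_tags) mem_Collect_eq)
qed

lemma lmul_e_diff: "lmul_e e i (a - b) = lmul_e e i a - lmul_e e i (b::'a::nonassoc_ring)"
  by (simp add: lmul_e_def na_distribs)

lemma rmul_e_diff: "rmul_e e j (a - b) = rmul_e e j a - rmul_e e j (b::'a::nonassoc_ring)"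
  by (simp add: rmul_e_def na_distribs)

lemma lmul_e_minus: "lmul_e e i (- a) = - lmul_e e i (a::'a::nonassoc_ring)"
  by (simp add: lmul_e_def na_distribs)

lemma rmul_e_minus: "rmul_e e j (- a) = - rmul_e e j (a::'a::nonassoc_ring)"
  by (simp add: rmul_e_def na_distribs)

lemma zero_mem_peirce: "(0::'a::nonassoc_ring) \<in> peirce e i j"
  unfolding peirce_def by (auto simp: lmul_e_def rmul_e_def intro!: exI[of _ 0])

lemma diff_mem_peirce:
  "x \<in> peirce e i j \<Longrightarrow> y \<in> peirce e i j \<Longrightarrow> x - y \<in> peirce e i j"
  for x y :: "'a::nonassoc_ring"
  unfolding peirce_def by (auto simp flip: lmul_e_diff rmul_e_diff)

lemma uminus_mem_peirce: "x \<in> peirce e i j \<Longrightarrow> - x \<in> peirce e i j"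
  for x :: "'a::nonassoc_ring"
  unfolding peirce_def by (auto simp flip: lmul_e_minus rmul_e_minus)

lemma mult_mem_peirce:
  fixes x y :: "'a::alternative_ring"
  assumes ee: "e * e = e" and x: "x \<in> peirce e i j" and y: "y \<in> peirce e j k"
  shows "x * y \<in> peirce e i k"
proof -
  have x': "lmul_e e i x = x" "rmul_e e j x = x" and y': "lmul_e e j y = y" "rmul_e e k y = y"
    using x y by (simp_all add: mem_peirce_iff[OF ee])
  have "(x * e) * y = x * (e * y)"
    using x'(2) y'(1) by (cases "j = 1") (auto simp: lmul_e_def rmul_e_def)
  then have "lmul_e e i (x * y) = lmul_e e i x * y" "rmul_e e k (x * y) = x * rmul_e e k y"
    using associator_swap12[of e x y] associator_swap23[of x e y]
    by (simp_all add: associator_def lmul_e_def rmul_e_def na_distribs)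
  then show ?thesis
    using x'(1) y'(2) by (simp add: mem_peirce_iff[OF ee])
qed

text \<open>Linearised alternativity alone only gives \<open>2 * (x * y) = 0\<close> for these products; the Moufang
  identities avoid any assumption on the characteristic.\<close>

lemma mult_peirce_ii_ji_eq_0:
  fixes x y :: "'a::alternative_ring"
  assumes ee: "e * e = e" and ij: "i \<in> {1, 2}" "j \<in> {1, 2}" "i \<noteq> j"
    and x: "x \<in> peirce e i i" and y: "y \<in> peirce e j i"
  shows "x * y = 0"
proof (cases "i = 1")
  case True
  with ij have "j = 2" by auto
  with True x y have "e * x = x" "x * e = x" "e * y = 0"
    by (simp_all add: mem_peirce_iff[OF ee] lmul_e_def rmul_e_def)
  then show ?thesis
    using moufang_left[of e x y] by simp
next
  case False
  with ij have "i = 2" "j = 1" by auto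
  with x y have "e * x = 0" "x * e = 0" "e * y = y"
    by (simp_all add: mem_peirce_iff[OF ee] lmul_e_def rmul_e_def)
  moreover from this have "e * (x * y) = 0"
    using moufang_left[of e x y] by simp
  ultimately show ?thesis
    using associator_swap12[of e x y] by (simp add: associator_def)
qed

lemma mult_peirce_ij_ii_eq_0:
  fixes x y :: "'a::alternative_ring"
  assumes ee: "e * e = e" and ij: "i \<in> {1, 2}" "j \<in> {1, 2}" "i \<noteq> j"
    and y: "y \<in> peirce e i j" and x: "x \<in> peirce e i i"
  shows "y * x = 0"
proof (cases "i = 1")
  case True
  with ij have "j = 2" by auto
  with True x y have "e * x = x" "x * e = x" "y * e = 0"
    by (simp_all add: mem_peirce_iff[OF ee] lmul_e_def rmul_e_def)
  then show ?thesis
    using moufang_right[of y e x] by simp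
next
  case False
  with ij have "i = 2" "j = 1" by auto
  with x y have "e * x = 0" "x * e = 0" "y * e = y"
    by (simp_all add: mem_peirce_iff[OF ee] lmul_e_def rmul_e_def)
  moreover from this have "(y * x) * e = 0"
    using moufang_right[of y e x] by simp
  ultimately show ?thesis
    using associator_swap23[of y e x] by (simp add: associator_def)
qed

lemma commutator_e_eq_offdiag:
  "commutator x e = rmul_e e 1 (lmul_e e 2 x) - rmul_e e 2 (lmul_e e 1 (x::'a::nonassoc_ring))"
  by (simp add: commutator_def lmul_e_def rmul_e_def na_distribs)

lemma commutator_peirce_diag_e:
  "e * e = e \<Longrightarrow> x \<in> peirce e i i \<Longrightarrow> commutator x e = (0::'a::alternative_ring)"
  by (cases "i = 1") (auto simp: mem_peirce_iff lmul_e_def rmul_e_def commutator_def)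

lemma commutator_peirce_offdiag_e:
  fixes u v :: "'a::alternative_ring"
  assumes ee: "e * e = e" and u: "u \<in> peirce e 1 2" and v: "v \<in> peirce e 2 1"
  shows "commutator (v + u) e = v - u" "commutator (v - u) e = v + u"
  using u v by (simp_all add: mem_peirce_iff[OF ee] lmul_e_def rmul_e_def commutator_def na_distribs)

lemma commutator_commutator_peirce_e:
  fixes b c :: "'a::alternative_ring"
  assumes ee: "e * e = e" and b: "b \<in> peirce e i j" and c: "c \<in> peirce e j i"
  shows "commutator (commutator b c) e = 0"
proof -
  have "b * c \<in> peirce e i i" "c * b \<in> peirce e j j"
    using b c by (simp_all add: mult_mem_peirce[OF ee])
  then show ?thesis
    by (simp add: commutator_def[of b c] commutator_diff_left commutator_peirce_diag_e[OF ee])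
qed

lemma commutator_peirce_diag_offdiag_mem:
  fixes u v c :: "'a::alternative_ring"
  assumes ee: "e * e = e" and ij: "i \<in> {1, 2}" "j \<in> {1, 2}" "i \<noteq> j"
    and u: "u \<in> peirce e i i" and v: "v \<in> peirce e j j" and c: "c \<in> peirce e i j"
  shows "commutator (u + v) c \<in> peirce e i j"
proof -
  have "v * c = 0"
    using mult_peirce_ii_ji_eq_0[OF ee ij(2,1) ij(3)[symmetric] v c] .
  moreover have "c * u = 0"
    using mult_peirce_ij_ii_eq_0[OF ee ij c u] .
  ultimately have "commutator (u + v) c = u * c - c * v"
    by (simp add: commutator_def na_distribs)
  moreover have "u * c \<in> peirce e i j" "c * v \<in> peirce e i j"
    using u v c by (simp_all add: mult_mem_peirce[OF ee])
  ultimately show ?thesis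
    by (simp add: diff_mem_peirce)
qed

section \<open>Multiplicative Lie derivations\<close>

lemma lie_poly_add_first:
  "lie_poly k (w(0 := a + b)) = lie_poly k (w(0 := a)) + lie_poly k (w(0 := (b::'a::nonassoc_ring)))"
  by (induction k) (simp_all add: commutator_add_left)

lemma lie_poly_diff_first:
  "lie_poly k (w(0 := a - b)) = lie_poly k (w(0 := a)) - lie_poly k (w(0 := (b::'a::nonassoc_ring)))"
  by (induction k) (simp_all add: commutator_diff_left)

lemma lie_poly_eq_0_mono:
  assumes "lie_poly j w = (0::'a::nonassoc_ring)" and "j \<le> k"
  shows "lie_poly k w = 0"
  using assms(2) by (induction k rule: dec_induct) (simp_all add: assms(1))

lemma mult_lie_n_derivation_map_zero:
  fixes D :: "'a::nonassoc_ring \<Rightarrow> 'a"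
  assumes D: "mult_lie_n_derivation (Suc m) D" and m: "1 \<le> m"
  shows "D 0 = 0"
proof -
  have lie_0: "lie_poly m ((\<lambda>_. 0)(i := x)) = (0::'a)" for i x
  proof (cases "i = 0")
    case True
    show ?thesis by (rule lie_poly_eq_0_mono[of 1]) (use True m in simp_all)
  next
    case False
    show ?thesis by (rule lie_poly_eq_0_mono[of 0]) (use False in simp_all)
  qed
  have "D (lie_poly m (\<lambda>_. 0)) = (\<Sum>i<Suc m. lie_poly m ((\<lambda>_. 0)(i := D 0)))"
    using D unfolding mult_lie_n_derivation_def by auto
  moreover have "lie_poly m (\<lambda>_. 0) = (0::'a)"
    by (rule lie_poly_eq_0_mono[of 0]) simp_all
  ultimately show ?thesis
    by (simp add: lie_0)
qed

lemma mult_lie_n_derivation_2_commutator: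
  fixes D :: "'a::nonassoc_ring \<Rightarrow> 'a"
  assumes "mult_lie_n_derivation 2 D"
  shows "D (commutator u v) = commutator (D u) v + commutator u (D v)"
  using assms unfolding mult_lie_n_derivation_def
  by (auto simp: lessThan_Suc numeral_2_eq_2 dest: spec[of _ "(\<lambda>_. v)(0 := u)"])

lemma mult_lie_n_derivation_3_if_2:
  fixes D :: "'a::nonassoc_ring \<Rightarrow> 'a"
  assumes "mult_lie_n_derivation 2 D"
  shows "mult_lie_n_derivation 3 D"
  unfolding mult_lie_n_derivation_def
proof
  fix x :: "nat \<Rightarrow> 'a"
  have "D (lie_poly (3 - 1) x) = D (commutator (commutator (x 0) (x 1)) (x 2))"
    by (simp add: numeral_2_eq_2)
  also have "\<dots> = commutator (commutator (D (x 0)) (x 1)) (x 2)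
      + commutator (commutator (x 0) (D (x 1))) (x 2) + commutator (commutator (x 0) (x 1)) (D (x 2))"
    by (simp add: mult_lie_n_derivation_2_commutator[OF assms] commutator_add_left)
  also have "\<dots> = (\<Sum>i<3. lie_poly (3 - 1) (x(i := D (x i))))"
    by (simp add: numeral_3_eq_3 numeral_2_eq_2 lessThan_Suc add.commute add.left_commute)
  finally show "D (lie_poly (3 - 1) x) = (\<Sum>i<3. lie_poly (3 - 1) (x(i := D (x i))))" .
qed

text \<open>A Lie 2-derivation is a Lie 3-derivation, so at least three arguments are available; the third
  one is needed for the vanishing of \<open>[[b, c], e]\<close>.\<close>

lemma mult_lie_type_derivation_obtain:
  assumes "mult_lie_type_derivation (D::'a::nonassoc_ring \<Rightarrow> 'a)"
  obtains m where "2 \<le> m" "mult_lie_n_derivation (Suc m) D"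
proof -
  obtain n where n: "2 \<le> n" "mult_lie_n_derivation n D"
    using assms unfolding mult_lie_type_derivation_def by blast
  show ?thesis
  proof (cases "n = 2")
    case True
    with n have "mult_lie_n_derivation 3 D"
      by (simp add: mult_lie_n_derivation_3_if_2)
    then show ?thesis
      using that[of 2] by simp
  next
    case False
    then show ?thesis
      using that[of "n - 1"] n by simp
  qed
qed

lemma lie_poly_additivity_defect_eq_0:
  fixes D :: "'a::nonassoc_ring \<Rightarrow> 'a"
  assumes D: "mult_lie_n_derivation (Suc m) D" and m: "1 \<le> m"
    and vanish: "lie_poly m (y(0 := a)) = 0"
  shows "lie_poly m (y(0 := D (a + b) - D a - D b)) = 0"
proof -
  define L where "L u = lie_poly m (y(0 := u))" for u
  define S where "S u = (\<Sum>j<m. lie_poly m ((y(Suc j := D (y (Suc j))))(0 := u)))" for u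
  have expand: "D (L u) = L (D u) + S u" for u
  proof -
    have "D (L u) = (\<Sum>i<Suc m. lie_poly m ((y(0 := u))(i := D ((y(0 := u)) i))))"
      using D unfolding mult_lie_n_derivation_def L_def by simp
    also have "\<dots> = L (D u) + S u"
      unfolding sum.lessThan_Suc_shift L_def S_def by (simp add: fun_upd_twist)
    finally show ?thesis .
  qed
  have L_add: "L (u + v) = L u + L v" for u v
    unfolding L_def by (rule lie_poly_add_first)
  have S_add: "S (u + v) = S u + S v" for u v
    unfolding S_def by (simp add: lie_poly_add_first sum.distrib)
  have "L a = 0"
    using vanish unfolding L_def .
  then have "L (D (a + b)) + S a + S b = L (D b) + S b"
    using expand[of "a + b"] expand[of b] L_add[of a b] S_add[of a b] by (simp add: add.assoc)
  moreover have "S a = - L (D a)"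
    using expand[of a] \<open>L a = 0\<close> mult_lie_n_derivation_map_zero[OF D m]
    by (simp add: eq_neg_iff_add_eq_0 add.commute)
  ultimately have "L (D (a + b)) - L (D a) - L (D b) = 0"
    by (simp add: algebra_simps)
  then show ?thesis
    unfolding L_def by (simp add: lie_poly_diff_first)
qed

section \<open>Iterated commutators with the idempotent\<close>

lemma lie_poly_e_offdiag_eq_0:
  fixes u v :: "'a::alternative_ring"
  assumes ee: "e * e = e" and u: "u \<in> peirce e 1 2" and v: "v \<in> peirce e 2 1"
    and first: "lie_poly j w = u + v" and tail: "\<forall>l>j. w l = e"
    and "j \<le> k" and vanish: "lie_poly k w = 0"
  shows "u = 0 \<and> v = 0"
proof -
  have "lie_poly k w = v + u \<or> lie_poly k w = v - u"
    using \<open>j \<le> k\<close>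
  proof (induction k rule: dec_induct)
    case base
    then show ?case using first by (simp add: add.commute)
  next
    case (step k)
    then have "w (Suc k) = e" using tail by simp
    with step.IH show ?case
      using commutator_peirce_offdiag_e[OF ee u v] by auto
  qed
  then have "e * (v + u) = 0 \<or> e * (v - u) = 0"
    using vanish by auto
  moreover have "e * u = u" "e * v = 0"
    using u v by (simp_all add: mem_peirce_iff[OF ee] lmul_e_def)
  ultimately have "u = 0" by (auto simp: na_distribs)
  with \<open>lie_poly k w = v + u \<or> lie_poly k w = v - u\<close> vanish show ?thesis by auto
qed

lemma peirce_diag_if_lie_poly_e_eq_0:
  fixes x :: "'a::alternative_ring"
  assumes ee: "e * e = e" and m: "1 \<le> m" and vanish: "lie_poly m ((\<lambda>_. e)(0 := x)) = 0"
  obtains x11 x22 where "x11 \<in> peirce e 1 1" "x22 \<in> peirce e 2 2" "x = x11 + x22"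
proof -
  define x12 where "x12 = rmul_e e 2 (lmul_e e 1 x)"
  define x21 where "x21 = rmul_e e 1 (lmul_e e 2 x)"
  have "x12 \<in> peirce e 1 2" "x21 \<in> peirce e 2 1"
    unfolding x12_def x21_def peirce_def by auto
  then have "- x12 \<in> peirce e 1 2" "x21 \<in> peirce e 2 1"
    by (simp_all add: uminus_mem_peirce)
  moreover have "lie_poly 1 ((\<lambda>_. e)(0 := x)) = - x12 + x21"
    by (simp add: commutator_e_eq_offdiag x12_def x21_def)
  ultimately have "- x12 = 0 \<and> x21 = 0"
    by (intro lie_poly_e_offdiag_eq_0[OF ee _ _ _ _ m vanish]) simp_all
  then have "x12 = 0" "x21 = 0" by simp_all
  moreover have "x = rmul_e e 1 (lmul_e e 1 x) + x12 + x21 + rmul_e e 2 (lmul_e e 2 x)"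
    by (simp add: x12_def x21_def lmul_e_def rmul_e_def)
  moreover have "rmul_e e 1 (lmul_e e 1 x) \<in> peirce e 1 1" "rmul_e e 2 (lmul_e e 2 x) \<in> peirce e 2 2"
    unfolding peirce_def by auto
  ultimately show ?thesis
    using that by simp
qed

lemma commutator_peirce_diag_eq_0_if_lie_poly_e_eq_0:
  fixes u v c :: "'a::alternative_ring"
  assumes ee: "e * e = e" and ij: "i \<in> {1, 2}" "j \<in> {1, 2}" "i \<noteq> j"
    and u: "u \<in> peirce e 1 1" and v: "v \<in> peirce e 2 2" and c: "c \<in> peirce e i j"
    and m: "1 \<le> m" and vanish: "lie_poly m ((\<lambda>_. e)(1 := c, 0 := u + v)) = 0"
  shows "commutator (u + v) c = 0"
proof -
  have first: "lie_poly 1 ((\<lambda>_. e)(1 := c, 0 := u + v)) = commutator (u + v) c"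
    by simp
  show ?thesis
  proof (cases "i = 1")
    case True
    with ij have "j = 2" by auto
    with True u v c have "commutator (u + v) c \<in> peirce e 1 2"
      using commutator_peirce_diag_offdiag_mem[OF ee, of 1 2] by simp
    then show ?thesis
      using lie_poly_e_offdiag_eq_0[OF ee _ zero_mem_peirce _ _ m vanish] first by simp
  next
    case False
    with ij have "i = 2" "j = 1" by auto
    with u v c have "commutator (v + u) c \<in> peirce e 2 1"
      using commutator_peirce_diag_offdiag_mem[OF ee, of 2 1] by simp
    then show ?thesis
      using lie_poly_e_offdiag_eq_0[OF ee zero_mem_peirce _ _ _ m vanish] first
      by (simp add: add.commute)
  qed
qed

lemma additivity_defect_peirce_diag:
  fixes e a b :: "'a::alternative_ring"
  assumes ee: "e * e = e" and D: "mult_lie_n_derivation (Suc m) D" and m: "1 \<le> m"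
    and a: "a \<in> peirce e 1 1"
  obtains t11 t22 where "t11 \<in> peirce e 1 1" "t22 \<in> peirce e 2 2"
    "D (a + b) - D a - D b = t11 + t22"
proof -
  have "lie_poly m ((\<lambda>_. e)(0 := a)) = 0"
    by (rule lie_poly_eq_0_mono[of 1]) (use commutator_peirce_diag_e[OF ee a] m in simp_all)
  then have "lie_poly m ((\<lambda>_. e)(0 := D (a + b) - D a - D b)) = 0"
    by (rule lie_poly_additivity_defect_eq_0[OF D m])
  then show ?thesis
    using peirce_diag_if_lie_poly_e_eq_0[OF ee m] that by blast
qed

lemma commutator_additivity_defect_eq_0:
  fixes e a b c :: "'a::alternative_ring"
  assumes ee: "e * e = e" and D: "mult_lie_n_derivation (Suc m) D" and m: "2 \<le> m"
    and ij: "i \<in> {1, 2}" "j \<in> {1, 2}" "i \<noteq> j"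
    and a: "a \<in> peirce e 1 1" and b: "b \<in> peirce e i j" and c: "c \<in> peirce e j i"
  shows "commutator (D (a + b) - D a - D b) c = 0"
proof -
  from m have m1: "1 \<le> m" by simp
  obtain t11 t22 where t11: "t11 \<in> peirce e 1 1" and t22: "t22 \<in> peirce e 2 2"
    and defect: "D (a + b) - D a - D b = t11 + t22"
    using additivity_defect_peirce_diag[OF ee D m1 a] by blast
  have "lie_poly m ((\<lambda>_. e)(1 := c, 0 := b)) = 0"
    by (rule lie_poly_eq_0_mono[of 2])
      (use commutator_commutator_peirce_e[OF ee b c] m in \<open>simp_all add: numeral_2_eq_2\<close>)
  then have "lie_poly m ((\<lambda>_. e)(1 := c, 0 := D (b + a) - D b - D a)) = 0"
    by (rule lie_poly_additivity_defect_eq_0[OF D m1])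
  then have "lie_poly m ((\<lambda>_. e)(1 := c, 0 := t11 + t22)) = 0"
    by (simp add: defect[symmetric] add.commute diff_diff_eq)
  then show ?thesis
    unfolding defect
    by (rule commutator_peirce_diag_eq_0_if_lie_poly_e_eq_0[OF ee ij(2,1) ij(3)[symmetric] t11 t22 c m1])
qed

theorem lemma2p2:
  fixes e :: "'a::alternative_ring" and D :: "'a \<Rightarrow> 'a"
  assumes idem: "nontrivial_idempotent e"
    and cond_i: "\<And>a11 a22. a11 \<in> peirce e 1 1 \<Longrightarrow> a22 \<in> peirce e 2 2 \<Longrightarrow>
        (\<forall>x \<in> peirce e 1 2. commutator (a11 + a22) x = 0) \<Longrightarrow> a11 + a22 \<in> center"
    and cond_ii: "\<And>a11 a22. a11 \<in> peirce e 1 1 \<Longrightarrow> a22 \<in> peirce e 2 2 \<Longrightarrow>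
        (\<forall>x \<in> peirce e 2 1. commutator (a11 + a22) x = 0) \<Longrightarrow> a11 + a22 \<in> center"
    and D: "mult_lie_type_derivation D"
    and ij: "i \<in> {1, 2}" "j \<in> {1, 2}" "i \<noteq> j"
    and a: "a11 \<in> peirce e 1 1"
    and b: "b \<in> peirce e i j"
  shows "\<exists>z \<in> center. D (a11 + b) = D a11 + D b + z"
proof -
  have ee: "e * e = e"
    using idem by (simp add: nontrivial_idempotent_def)
  obtain m where m: "2 \<le> m" and Dm: "mult_lie_n_derivation (Suc m) D"
    using D by (rule mult_lie_type_derivation_obtain)
  then have m1: "1 \<le> m" by simp
  obtain t11 t22 where t11: "t11 \<in> peirce e 1 1" and t22: "t22 \<in> peirce e 2 2"
    and defect: "D (a11 + b) - D a11 - D b = t11 + t22"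
    by (rule additivity_defect_peirce_diag[OF ee Dm m1 a])
  have "\<forall>c \<in> peirce e j i. commutator (t11 + t22) c = 0"
    using commutator_additivity_defect_eq_0[OF ee Dm m ij a b] by (simp add: defect)
  then have "t11 + t22 \<in> center"
    using ij cond_i[OF t11 t22] cond_ii[OF t11 t22] by auto
  moreover have "D (a11 + b) = D a11 + D b + (t11 + t22)"
    by (simp add: defect[symmetric])
  ultimately show ?thesis by blast
qed

end
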